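(* Let $0=t_0<t_1<\dots<t_N=T$ be a time grid with $\tau_k=t_k-t_{k-1}$ and $r_k=\tau_k/\tau_{k-1}$ ($k\ge2$). Let $0<\iota<1$ and let $v\in C^2(0,T]$ (and $v\in C[0,T]$) satisfy $|v_{tt}(t)|\le C(1+t^{\iota-2})$ for $t\in(0,T]$. Define, for $2\le n\le N$, $\mathcal R^n[v]:=v(t_n)-(1+r_n)v(t_{n-1})+r_nv(t_{n-2})$. Then there is a constant $C_v$ depending only on $v$ such that $$|\mathcal R^2[v]|\le C_v\big((\tau_1+\tau_2)^\iota/\iota+t_1^{\iota-2}\tau_2^2\big),\qquad |\mathcal R^n[v]|\le C_v\big(t_{n-2}^{\iota-2}(\tau_{n-1}+\tau_n)^2+t_{n-1}^{\iota-2}\tau_n^2\big),\ 3\le n\le N.$$ Moreover, if the grid is graded, $t_k=T(k/N)^\gamma$ with $\gamma\ge1$, then $|\mathcal R^n[v]|\le C_{v,\gamma}N^{-\min\{2,\gamma\iota\}}$ for $2\le n\le N$, where $C_{v,\gamma}$ depends only on $v$ and $\gamma$. *)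

theory Defs
  imports Complex_Main
begin

definition is_grid :: "real \<Rightarrow> nat \<Rightarrow> (nat \<Rightarrow> real) \<Rightarrow> bool" where
  "is_grid T N t \<longleftrightarrow> t 0 = 0 \<and> t N = T \<and> (\<forall>k<N. t k < t (Suc k))"

definition tau :: "(nat \<Rightarrow> real) \<Rightarrow> nat \<Rightarrow> real" where
  "tau t k = t k - t (k - 1)"

definition ratio :: "(nat \<Rightarrow> real) \<Rightarrow> nat \<Rightarrow> real" where
  "ratio t k = tau t k / tau t (k - 1)"

definition Rres :: "(real \<Rightarrow> real) \<Rightarrow> (nat \<Rightarrow> real) \<Rightarrow> nat \<Rightarrow> real" where
  "Rres v t n = v (t n) - (1 + ratio t n) * v (t (n - 1)) + ratio t n * v (t (n - 2))"

definition graded :: "real \<Rightarrow> real \<Rightarrow> nat \<Rightarrow> nat \<Rightarrow> real" where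
  "graded T \<gamma> N k = T * (real k / real N) powr \<gamma>"

end

theory Submission
  imports Defs
begin

text \<open>
  With a = t(n-2), b = t(n-1), c = t(n), the residual R^n[v] is (c - b)(c - a) times the second
  divided difference of v at a < b < c, hence nonnegative for convex v. Applied to u + v and
  u - v for a majorant u with |v''| \<le> u'', this bounds |R^n[v]| by R^n[u], which is computed
  explicitly. For n \<ge> 3 the interval stays away from the singularity at 0 and u is quadratic;
  for n = 2 it reaches 0, and u(s) = C s^2/2 - C s^\<iota> / (\<iota>(1 - \<iota>)) has second derivative exactly
  C (1 + s^(\<iota>-2)). On the graded grid t(n-2) = T x^\<gamma> with x = (n-2)/N \<ge> 1/N, and by the mean
  value theorem t(n) - t(n-2) \<le> 2\<gamma> 3^(\<gamma>-1) T x^(\<gamma>-1) / N; this turns both estimates into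
  the rate N^(-min(2, \<gamma>\<iota>)).
\<close>

lemma MVT_interior:
  fixes f f' :: "real \<Rightarrow> real"
  assumes "a < b" and "continuous_on {a..b} f"
    and "\<And>x. a < x \<Longrightarrow> x < b \<Longrightarrow> (f has_real_derivative f' x) (at x)"
  shows "\<exists>z. a < z \<and> z < b \<and> f b - f a = (b - a) * f' z"
proof -
  obtain l z where "a < z" "z < b" "(f has_real_derivative l) (at z)" "f b - f a = (b - a) * l"
    using MVT[OF assms(1,2)] assms(3) real_differentiable_def by meson
  then show ?thesis
    using assms(3) DERIV_unique by metis
qed

definition second_diff :: "(real \<Rightarrow> real) \<Rightarrow> real \<Rightarrow> real \<Rightarrow> real \<Rightarrow> real" where
  "second_diff g a b c = (g c - g b) - (c - b) / (b - a) * (g b - g a)"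

lemma Rres_eq_second_diff:
  assumes "2 \<le> n"
  shows "Rres v t n = second_diff v (t (n - 2)) (t (n - 1)) (t n)"
proof -
  have "n - 1 - 1 = n - 2" by simp
  moreover have "x - (1 + r) * y + r * z = (x - y) - r * (y - z)" for x y z r :: real
    by algebra
  ultimately show ?thesis
    unfolding Rres_def ratio_def tau_def second_diff_def by presburger
qed

lemma second_diff_add: "second_diff (\<lambda>x. f x + g x) a b c = second_diff f a b c + second_diff g a b c"
  and second_diff_diff: "second_diff (\<lambda>x. f x - g x) a b c = second_diff f a b c - second_diff g a b c"
  and second_diff_cmult: "second_diff (\<lambda>x. k * f x) a b c = k * second_diff f a b c"
  unfolding second_diff_def by (simp_all only: ring_distribs) algebra+

lemma second_diff_square:
  "a < b \<Longrightarrow> second_diff (\<lambda>x. x\<^sup>2) a b c = (c - b) * (c - a)"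
  unfolding second_diff_def by (simp add: field_simps power2_eq_square)

lemma second_diff_powr_origin:
  assumes "0 < b" "0 < p"
  shows "second_diff (\<lambda>x. x powr p) 0 b c = c powr p - b powr p - (c - b) * b powr (p - 1)"
  unfolding second_diff_def using assms by (simp add: powr_diff)

lemma second_diff_nonneg:
  fixes g g' g'' :: "real \<Rightarrow> real"
  assumes ab: "a < b" and bc: "b < c" and cont: "continuous_on {a..c} g"
    and g': "\<And>x. a < x \<Longrightarrow> x < c \<Longrightarrow> (g has_real_derivative g' x) (at x)"
    and g'': "\<And>x. a < x \<Longrightarrow> x < c \<Longrightarrow> (g' has_real_derivative g'' x) (at x)"
    and nonneg: "\<And>x. a < x \<Longrightarrow> x < c \<Longrightarrow> 0 \<le> g'' x"
  shows "0 \<le> second_diff g a b c"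
proof -
  have "continuous_on {a..b} g" "continuous_on {b..c} g"
    using ab bc by (auto intro: continuous_on_subset[OF cont])
  then obtain z1 z2 where z1: "a < z1" "z1 < b" "g b - g a = (b - a) * g' z1"
    and z2: "b < z2" "z2 < c" "g c - g b = (c - b) * g' z2"
    using MVT_interior[OF ab, of g g'] MVT_interior[OF bc, of g g'] g' ab bc by auto
  have "isCont g' x" if "z1 \<le> x" "x \<le> z2" for x
    using g''[of x] that z1 z2 DERIV_isCont by force
  then have "continuous_on {z1..z2} g'"
    by (simp add: continuous_at_imp_continuous_on)
  then obtain w where w: "z1 < w" "w < z2" "g' z2 - g' z1 = (z2 - z1) * g'' w"
    using MVT_interior[of z1 z2 g' g''] g'' z1 z2 by auto
  have "0 \<le> (z2 - z1) * g'' w"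
    using w nonneg[of w] z1 z2 by simp
  then have "g' z1 \<le> g' z2"
    using w by linarith
  then have "(g b - g a) / (b - a) \<le> (g c - g b) / (c - b)"
    using z1 z2 ab bc by simp
  then show ?thesis
    unfolding second_diff_def using ab bc by (simp add: field_simps)
qed

lemma second_diff_abs_le:
  fixes v v' v'' u u' u'' :: "real \<Rightarrow> real"
  assumes ab: "a < b" and bc: "b < c"
    and cont_v: "continuous_on {a..c} v" and cont_u: "continuous_on {a..c} u"
    and v': "\<And>x. a < x \<Longrightarrow> x < c \<Longrightarrow> (v has_real_derivative v' x) (at x)"
    and v'': "\<And>x. a < x \<Longrightarrow> x < c \<Longrightarrow> (v' has_real_derivative v'' x) (at x)"
    and u': "\<And>x. a < x \<Longrightarrow> x < c \<Longrightarrow> (u has_real_derivative u' x) (at x)"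
    and u'': "\<And>x. a < x \<Longrightarrow> x < c \<Longrightarrow> (u' has_real_derivative u'' x) (at x)"
    and dominated: "\<And>x. a < x \<Longrightarrow> x < c \<Longrightarrow> \<bar>v'' x\<bar> \<le> u'' x"
  shows "\<bar>second_diff v a b c\<bar> \<le> second_diff u a b c"
proof -
  have plus: "0 \<le> u'' x + v'' x" and minus: "0 \<le> u'' x - v'' x" if "a < x" "x < c" for x
    using dominated[OF that] by (simp_all add: abs_le_iff)
  have "0 \<le> second_diff (\<lambda>x. u x + v x) a b c"
    using plus
    by (intro second_diff_nonneg[OF ab bc, where g' = "\<lambda>x. u' x + v' x" and g'' = "\<lambda>x. u'' x + v'' x"])
      (auto intro!: continuous_on_add DERIV_add cont_u cont_v u' v' u'' v'')
  moreover have "0 \<le> second_diff (\<lambda>x. u x - v x) a b c"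
    using minus
    by (intro second_diff_nonneg[OF ab bc, where g' = "\<lambda>x. u' x - v' x" and g'' = "\<lambda>x. u'' x - v'' x"])
      (auto intro!: continuous_on_diff DERIV_diff cont_u cont_v u' v' u'' v'')
  ultimately show ?thesis
    by (simp add: second_diff_add second_diff_diff)
qed

lemma second_diff_abs_le_bounded_deriv2:
  fixes v v' v'' :: "real \<Rightarrow> real"
  assumes ab: "a < b" and bc: "b < c" and cont: "continuous_on {a..c} v"
    and v': "\<And>x. a < x \<Longrightarrow> x < c \<Longrightarrow> (v has_real_derivative v' x) (at x)"
    and v'': "\<And>x. a < x \<Longrightarrow> x < c \<Longrightarrow> (v' has_real_derivative v'' x) (at x)"
    and bounded: "\<And>x. a < x \<Longrightarrow> x < c \<Longrightarrow> \<bar>v'' x\<bar> \<le> M"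
  shows "\<bar>second_diff v a b c\<bar> \<le> M / 2 * ((c - b) * (c - a))"
proof -
  have "\<bar>second_diff v a b c\<bar> \<le> second_diff (\<lambda>x. M / 2 * x\<^sup>2) a b c"
    by (rule second_diff_abs_le[OF ab bc cont _ v' v'', where u' = "\<lambda>x. M * x" and u'' = "\<lambda>_. M"])
      (intro continuous_intros, auto intro!: derivative_eq_intros bounded)
  then show ?thesis
    unfolding second_diff_cmult second_diff_square[OF ab] .
qed

lemma mult_powr_le_powr_add:
  fixes b h p :: real
  assumes b: "0 < b" and h: "0 \<le> h"
  shows "h * b powr (p - 1) \<le> b powr p + b powr (p - 2) * h\<^sup>2"
proof -
  have "0 \<le> (h - b)\<^sup>2" "0 \<le> h * b"
    using b h by simp_all
  then have "h * b \<le> b\<^sup>2 + h\<^sup>2"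
    unfolding power2_diff by linarith
  then have "b powr (p - 2) * (h * b) \<le> b powr (p - 2) * (b\<^sup>2 + h\<^sup>2)"
    by (intro mult_left_mono) auto
  moreover have "b powr (p - 1) = b powr (p - 2) * b"
    using powr_add[of b "p - 2" 1] b by simp
  moreover have "b powr p = b powr (p - 2) * b\<^sup>2"
    using b by (simp add: powr_diff)
  ultimately show ?thesis
    by (simp add: algebra_simps)
qed

lemma second_diff_origin_majorant_le:
  fixes C K \<iota> T :: real
  assumes b: "0 < b" and bc: "b < c" and cT: "c \<le> T" and \<iota>: "0 < \<iota>" "\<iota> < 1"
    and C: "0 \<le> C" and K: "0 \<le> K"
  shows "second_diff (\<lambda>x. C / 2 * x\<^sup>2 - K * x powr \<iota>) 0 b c
    \<le> (C * T powr (2 - \<iota>) + K) * (c powr \<iota> / \<iota> + b powr (\<iota> - 2) * (c - b)\<^sup>2)"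
proof -
  define P where "P = c powr \<iota> / \<iota> + b powr (\<iota> - 2) * (c - b)\<^sup>2"
  have c_le: "c powr \<iota> \<le> c powr \<iota> / \<iota>"
    using \<iota> by (simp add: le_divide_eq mult_left_le)
  moreover have "0 \<le> b powr (\<iota> - 2) * (c - b)\<^sup>2"
    by simp
  ultimately have c_le_P: "c powr \<iota> \<le> P"
    unfolding P_def by linarith
  have "(c - b) * c \<le> c powr (2 - \<iota>) * c powr \<iota>"
    using b bc by (simp add: power2_eq_square powr_diff)
  also have "\<dots> \<le> T powr (2 - \<iota>) * P"
    using b bc cT \<iota> c_le_P by (intro mult_mono powr_mono2) auto
  finally have "C * ((c - b) * c) \<le> C * (T powr (2 - \<iota>) * P)"
    using C by (rule mult_left_mono)
  moreover have "0 \<le> C * ((c - b) * c)"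
    using b bc C by simp
  moreover have "b powr \<iota> \<le> c powr \<iota>"
    using b bc \<iota> by (intro powr_mono2) auto
  moreover have "(c - b) * b powr (\<iota> - 1) \<le> b powr \<iota> + b powr (\<iota> - 2) * (c - b)\<^sup>2"
    using b bc by (intro mult_powr_le_powr_add) auto
  ultimately have "C / 2 * ((c - b) * c) \<le> C * (T powr (2 - \<iota>) * P)"
    and singular_part: "- (c powr \<iota> - b powr \<iota> - (c - b) * b powr (\<iota> - 1)) \<le> P"
    using c_le unfolding P_def by linarith+
  moreover have "- (K * (c powr \<iota> - b powr \<iota> - (c - b) * b powr (\<iota> - 1))) \<le> K * P"
    using mult_left_mono[OF singular_part K] by (simp add: right_diff_distrib)
  moreover have "second_diff (\<lambda>x. C / 2 * x\<^sup>2 - K * x powr \<iota>) 0 b c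
      = C / 2 * ((c - b) * c) - K * (c powr \<iota> - b powr \<iota> - (c - b) * b powr (\<iota> - 1))"
    unfolding second_diff_diff second_diff_cmult second_diff_square[OF b]
      second_diff_powr_origin[OF b \<iota>(1)] by simp
  moreover have "(C * T powr (2 - \<iota>) + K) * P = C * (T powr (2 - \<iota>) * P) + K * P"
    by (simp add: algebra_simps)
  ultimately show ?thesis
    unfolding P_def[symmetric] by linarith
qed

lemma is_grid_less:
  assumes grid: "is_grid T N t" and "i < j" "j \<le> N"
  shows "t i < t j"
  using assms(2,3)
proof (induction j)
  case 0
  then show ?case by simp
next
  case (Suc j)
  have "t j < t (Suc j)"
    using grid Suc.prems unfolding is_grid_def by auto
  then show ?case
    using Suc by (cases "i = j") auto
qed

lemma is_grid_pos: "is_grid T N t \<Longrightarrow> 0 < i \<Longrightarrow> i \<le> N \<Longrightarrow> 0 < t i"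
  using is_grid_less[of T N t 0 i] by (simp add: is_grid_def)

lemma is_grid_le: "is_grid T N t \<Longrightarrow> i \<le> N \<Longrightarrow> t i \<le> T"
  using is_grid_less[of T N t i N] by (cases "i = N") (auto simp: is_grid_def)

lemma tau_add_tau: "2 \<le> n \<Longrightarrow> tau t (n - 1) + tau t n = t n - t (n - 2)"
  unfolding tau_def by (simp add: numeral_2_eq_2)

lemma is_grid_graded:
  assumes "0 < T" "0 < \<gamma>" "1 \<le> N"
  shows "is_grid T N (graded T \<gamma> N)"
  unfolding is_grid_def graded_def
  using assms by (auto intro!: powr_less_mono2 divide_strict_right_mono)

lemma powr_diff_powr_le:
  fixes x y \<gamma> :: real
  assumes "1 \<le> \<gamma>" "0 < x" "x < y"
  shows "y powr \<gamma> - x powr \<gamma> \<le> \<gamma> * y powr (\<gamma> - 1) * (y - x)"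
proof -
  have "((\<lambda>t. t powr \<gamma>) has_real_derivative \<gamma> * t powr (\<gamma> - 1)) (at t)" if "x \<le> t" for t
    using that assms by (auto intro!: derivative_eq_intros)
  then obtain z where z: "x < z" "z < y" "y powr \<gamma> - x powr \<gamma> = (y - x) * (\<gamma> * z powr (\<gamma> - 1))"
    using MVT2[OF \<open>x < y\<close>, of "\<lambda>t. t powr \<gamma>" "\<lambda>t. \<gamma> * t powr (\<gamma> - 1)"] by blast
  have "z powr (\<gamma> - 1) \<le> y powr (\<gamma> - 1)"
    using z assms by (intro powr_mono2) auto
  then have "(y - x) * (\<gamma> * z powr (\<gamma> - 1)) \<le> (y - x) * (\<gamma> * y powr (\<gamma> - 1))"
    using assms by (intro mult_left_mono) auto
  then show ?thesis
    using z by (simp add: algebra_simps)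
qed

lemma powr_div_powr_le_powr_min:
  fixes h x p q :: real
  assumes h: "0 < h" and x: "1 / h \<le> x" "x \<le> 1"
  shows "x powr (p - q) / h powr q \<le> h powr (- min q p)"
proof (cases "p \<le> q")
  case True
  have "x powr (p - q) \<le> (1 / h) powr (p - q)"
    using True h x by (intro powr_mono2') auto
  also have "\<dots> = h powr (q - p)"
    using h by (simp add: powr_divide powr_minus_divide[symmetric])
  finally have "x powr (p - q) / h powr q \<le> h powr (q - p) / h powr q"
    by (simp add: divide_right_mono)
  also have "\<dots> = h powr (- min q p)"
    using True h by (simp add: powr_diff powr_minus_divide)
  finally show ?thesis .
next
  case False
  have "x powr (p - q) \<le> 1 powr (p - q)"
    using False h x by (intro powr_mono2) (auto intro: order_trans[of 0 "1 / h"])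
  then have "x powr (p - q) / h powr q \<le> 1 / h powr q"
    by (simp add: divide_right_mono)
  also have "\<dots> = h powr (- min q p)"
    using False by (simp add: powr_minus_divide)
  finally show ?thesis .
qed

lemma graded_first_le:
  fixes T \<iota> \<gamma> :: real
  assumes T: "0 < T" and \<iota>: "0 < \<iota>" and \<gamma>: "0 < \<gamma>" and N: "2 \<le> N"
  defines "t \<equiv> graded T \<gamma> N"
  shows "(tau t 1 + tau t 2) powr \<iota> / \<iota> + t 1 powr (\<iota> - 2) * (tau t 2)\<^sup>2
    \<le> T powr \<iota> * (2 powr (\<gamma> * \<iota>) / \<iota> + (2 powr \<gamma>)\<^sup>2) * real N powr (- min 2 (\<gamma> * \<iota>))"
proof -
  define s where "s = t 1"
  have s_eq: "s = T * real N powr (- \<gamma>)"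
    using N by (simp add: s_def t_def graded_def powr_divide powr_minus_divide)
  have s: "0 < s"
    using T N s_eq by simp
  have t2: "t 2 = 2 powr \<gamma> * s"
    using N by (simp add: s_def t_def graded_def powr_divide)
  have "tau t 1 + tau t 2 = t 2" "tau t 2 = t 2 - s"
    by (simp_all add: tau_def s_def t_def graded_def)
  then have "(tau t 1 + tau t 2) powr \<iota> / \<iota> + t 1 powr (\<iota> - 2) * (tau t 2)\<^sup>2
      = t 2 powr \<iota> / \<iota> + s powr (\<iota> - 2) * (t 2 - s)\<^sup>2"
    by (simp add: s_def)
  also have "\<dots> \<le> t 2 powr \<iota> / \<iota> + s powr (\<iota> - 2) * (t 2)\<^sup>2"
    using s t2 \<gamma> by (intro add_left_mono mult_left_mono power_mono) (auto intro: ge_one_powr_ge_zero)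
  also have "\<dots> = (2 powr (\<gamma> * \<iota>) / \<iota> + (2 powr \<gamma>)\<^sup>2) * s powr \<iota>"
    using s by (simp add: t2 powr_mult powr_powr powr_diff algebra_simps)
  also have "\<dots> \<le> (2 powr (\<gamma> * \<iota>) / \<iota> + (2 powr \<gamma>)\<^sup>2) * (T powr \<iota> * real N powr (- min 2 (\<gamma> * \<iota>)))"
  proof (rule mult_left_mono)
    have "s powr \<iota> = T powr \<iota> * real N powr (- (\<gamma> * \<iota>))"
      using T by (simp add: s_eq powr_mult powr_powr)
    also have "\<dots> \<le> T powr \<iota> * real N powr (- min 2 (\<gamma> * \<iota>))"
      using N by (intro mult_left_mono powr_mono) auto
    finally show "s powr \<iota> \<le> T powr \<iota> * real N powr (- min 2 (\<gamma> * \<iota>))" .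
  qed (use \<iota> in simp)
  finally show ?thesis
    by (simp add: algebra_simps)
qed

lemma graded_diff_le:
  fixes T \<gamma> :: real
  assumes T: "0 < T" and \<gamma>: "1 \<le> \<gamma>" and m: "1 \<le> m" and N: "1 \<le> N"
  shows "graded T \<gamma> N (m + 2) - graded T \<gamma> N m
    \<le> T * (2 * \<gamma> * 3 powr (\<gamma> - 1)) * (real m / real N) powr (\<gamma> - 1) / real N"
proof -
  define x where "x = real m / real N"
  define y where "y = real (m + 2) / real N"
  have x: "0 < x" and xy: "x < y" and y_le: "y \<le> 3 * x" and y_sub_x: "y - x = 2 / real N"
    using m N by (auto simp: x_def y_def divide_strict_right_mono divide_right_mono diff_divide_distrib[symmetric])
  have "graded T \<gamma> N (m + 2) - graded T \<gamma> N m = T * (y powr \<gamma> - x powr \<gamma>)"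
    by (simp add: graded_def x_def y_def algebra_simps)
  also have "\<dots> \<le> T * (\<gamma> * y powr (\<gamma> - 1) * (y - x))"
    using T \<gamma> x xy by (intro mult_left_mono powr_diff_powr_le) auto
  also have "\<dots> \<le> T * (\<gamma> * (3 * x) powr (\<gamma> - 1) * (y - x))"
    using T \<gamma> x xy y_le by (intro mult_left_mono mult_right_mono powr_mono2) auto
  also have "\<dots> = T * (2 * \<gamma> * 3 powr (\<gamma> - 1)) * x powr (\<gamma> - 1) / real N"
    by (simp add: y_sub_x powr_mult)
  finally show ?thesis
    unfolding x_def .
qed

lemma graded_interior_le:
  fixes T \<iota> \<gamma> :: real
  assumes T: "0 < T" and \<iota>: "\<iota> \<le> 2" and \<gamma>: "1 \<le> \<gamma>" and n: "3 \<le> n" "n \<le> N"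
  defines "t \<equiv> graded T \<gamma> N"
  shows "t (n - 2) powr (\<iota> - 2) * (tau t (n - 1) + tau t n)\<^sup>2 + t (n - 1) powr (\<iota> - 2) * (tau t n)\<^sup>2
    \<le> 2 * T powr \<iota> * (2 * \<gamma> * 3 powr (\<gamma> - 1))\<^sup>2 * real N powr (- min 2 (\<gamma> * \<iota>))"
proof -
  define D where "D = 2 * \<gamma> * 3 powr (\<gamma> - 1)"
  define x where "x = real (n - 2) / real N"
  have grid: "is_grid T N t"
    unfolding t_def using T \<gamma> n by (intro is_grid_graded) auto
  have a: "0 < t (n - 2)" and ab: "t (n - 2) < t (n - 1)" and bc: "t (n - 1) < t n"
    using n is_grid_pos[OF grid] is_grid_less[OF grid] by auto
  have x: "0 < x" "1 / real N \<le> x" "x \<le> 1"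
    using n by (auto simp: x_def divide_right_mono)
  have a_eq: "t (n - 2) = T * x powr \<gamma>"
    by (simp add: t_def graded_def x_def)
  have "graded T \<gamma> N (n - 2 + 2) - graded T \<gamma> N (n - 2) \<le> T * D * x powr (\<gamma> - 1) / real N"
    unfolding D_def x_def using n by (intro graded_diff_le T \<gamma>) auto
  moreover have "n - 2 + 2 = n"
    using n by simp
  ultimately have "t n - t (n - 2) \<le> T * D * x powr (\<gamma> - 1) / real N"
    unfolding t_def by simp
  then have "t (n - 2) powr (\<iota> - 2) * (t n - t (n - 2))\<^sup>2
      \<le> t (n - 2) powr (\<iota> - 2) * (T * D * x powr (\<gamma> - 1) / real N)\<^sup>2"
    using ab bc by (intro mult_left_mono power_mono) auto
  also have "\<dots> = (T powr (\<iota> - 2) * T\<^sup>2) * D\<^sup>2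
      * ((x powr (\<gamma> * (\<iota> - 2)) * (x powr (\<gamma> - 1))\<^sup>2) / real N powr 2)"
    using n by (simp add: a_eq powr_mult powr_powr power_mult_distrib power_divide mult_ac)
  also have "T powr (\<iota> - 2) * T\<^sup>2 = T powr \<iota>"
    using T by (simp add: powr_diff)
  also have "x powr (\<gamma> * (\<iota> - 2)) * (x powr (\<gamma> - 1))\<^sup>2 = x powr (\<gamma> * \<iota> - 2)"
    using x by (simp add: powr_power flip: powr_add) (simp add: algebra_simps)
  also have "T powr \<iota> * D\<^sup>2 * (x powr (\<gamma> * \<iota> - 2) / real N powr 2)
      \<le> T powr \<iota> * D\<^sup>2 * real N powr (- min 2 (\<gamma> * \<iota>))"
    using x n powr_div_powr_le_powr_min[of "real N" x "\<gamma> * \<iota>" 2]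
    by (intro mult_left_mono) auto
  finally have first_term: "t (n - 2) powr (\<iota> - 2) * (t n - t (n - 2))\<^sup>2
      \<le> T powr \<iota> * D\<^sup>2 * real N powr (- min 2 (\<gamma> * \<iota>))" .
  have "t (n - 1) powr (\<iota> - 2) * (tau t n)\<^sup>2 \<le> t (n - 2) powr (\<iota> - 2) * (t n - t (n - 2))\<^sup>2"
    using a ab bc \<iota> by (auto simp: tau_def intro!: mult_mono powr_mono2' power_mono)
  then show ?thesis
    using first_term tau_add_tau[of n t] n by (simp add: D_def)
qed

locale weakly_singular =
  fixes T \<iota> C :: real and v v' v'' :: "real \<Rightarrow> real"
  assumes T_pos: "0 < T" and iota_pos: "0 < \<iota>" and iota_less_one: "\<iota> < 1"
    and continuous: "continuous_on {0..T} v"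
    and deriv: "\<forall>s\<in>{0<..T}. (v has_real_derivative v' s) (at s within {0<..T})"
    and deriv2: "\<forall>s\<in>{0<..T}. (v' has_real_derivative v'' s) (at s within {0<..T})"
    and deriv2_bound: "\<forall>s\<in>{0<..T}. \<bar>v'' s\<bar> \<le> C * (1 + s powr (\<iota> - 2))"
begin

lemma C_nonneg: "0 \<le> C"
proof -
  have "0 \<le> C * (1 + T powr (\<iota> - 2))"
    using deriv2_bound T_pos by (meson abs_ge_zero greaterThanAtMost_iff order_trans order_refl)
  moreover have "0 < 1 + T powr (\<iota> - 2)"
    by (simp add: add_pos_nonneg)
  ultimately show ?thesis
    by (simp add: zero_le_mult_iff)
qed

lemma
  assumes "0 < x" "x < T"
  shows deriv_at: "(v has_real_derivative v' x) (at x)"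
    and deriv2_at: "(v' has_real_derivative v'' x) (at x)"
proof -
  have "at x within {0<..T} = at x"
    using assms by (intro at_within_open_subset[of x "{0<..<T}"]) auto
  moreover have "(v has_real_derivative v' x) (at x within {0<..T})"
    "(v' has_real_derivative v'' x) (at x within {0<..T})"
    using deriv deriv2 assms by auto
  ultimately show "(v has_real_derivative v' x) (at x)" "(v' has_real_derivative v'' x) (at x)"
    by simp_all
qed

lemma second_diff_interior_le:
  assumes a: "0 < a" and ab: "a < b" and bc: "b < c" and cT: "c \<le> T"
  shows "\<bar>second_diff v a b c\<bar> \<le> C * (1 + T powr (2 - \<iota>)) * (a powr (\<iota> - 2) * (c - a)\<^sup>2)"
proof -
  define M where "M = C * (1 + a powr (\<iota> - 2))"
  have "\<bar>second_diff v a b c\<bar> \<le> M / 2 * ((c - b) * (c - a))"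
  proof (rule second_diff_abs_le_bounded_deriv2[OF ab bc])
    show "continuous_on {a..c} v"
      using a cT by (auto intro: continuous_on_subset[OF continuous])
    fix x assume x: "a < x" "x < c"
    then show "(v has_real_derivative v' x) (at x)" "(v' has_real_derivative v'' x) (at x)"
      using a cT by (auto intro: deriv_at deriv2_at)
    have "\<bar>v'' x\<bar> \<le> C * (1 + x powr (\<iota> - 2))"
      using deriv2_bound x a cT by auto
    also have "\<dots> \<le> M"
      unfolding M_def using C_nonneg x a iota_less_one
      by (intro mult_left_mono add_left_mono powr_mono2') auto
    finally show "\<bar>v'' x\<bar> \<le> M" .
  qed
  also have "\<dots> \<le> M * (c - a)\<^sup>2"
  proof -
    have "0 \<le> M"
      unfolding M_def using C_nonneg by simp
    moreover have "0 \<le> (c - b) * (c - a)" "(c - b) * (c - a) \<le> (c - a)\<^sup>2"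
      using ab bc by (auto simp: power2_eq_square intro: mult_right_mono)
    ultimately have "0 \<le> M * ((c - b) * (c - a))" "M * ((c - b) * (c - a)) \<le> M * (c - a)\<^sup>2"
      by (auto intro: mult_left_mono)
    then show ?thesis
      by linarith
  qed
  also have "M \<le> C * (1 + T powr (2 - \<iota>)) * a powr (\<iota> - 2)"
  proof -
    have "1 \<le> (T / a) powr (2 - \<iota>)"
      using a ab bc cT iota_less_one by (intro ge_one_powr_ge_zero) auto
    also have "\<dots> = T powr (2 - \<iota>) * a powr (\<iota> - 2)"
      using a T_pos by (simp add: powr_divide powr_diff)
    finally have "C * 1 \<le> C * (T powr (2 - \<iota>) * a powr (\<iota> - 2))"
      using C_nonneg by (rule mult_left_mono)
    then show ?thesis
      unfolding M_def by (simp add: algebra_simps)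
  qed
  finally show ?thesis
    by (simp add: mult_right_mono mult.assoc)
qed

lemma second_diff_origin_le:
  assumes b: "0 < b" and bc: "b < c" and cT: "c \<le> T"
  shows "\<bar>second_diff v 0 b c\<bar>
    \<le> (C * T powr (2 - \<iota>) + C / (\<iota> * (1 - \<iota>))) * (c powr \<iota> / \<iota> + b powr (\<iota> - 2) * (c - b)\<^sup>2)"
proof -
  define K where "K = C / (\<iota> * (1 - \<iota>))"
  have K: "0 \<le> K"
    unfolding K_def using C_nonneg iota_pos iota_less_one by simp
  have "\<bar>second_diff v 0 b c\<bar> \<le> second_diff (\<lambda>x. C / 2 * x\<^sup>2 - K * x powr \<iota>) 0 b c"
  proof (rule second_diff_abs_le[OF b bc, where u' = "\<lambda>x. C * x - K * (\<iota> * x powr (\<iota> - 1))"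
        and u'' = "\<lambda>x. C + C * x powr (\<iota> - 2)"])
    show "continuous_on {0..c} v"
      using cT by (auto intro: continuous_on_subset[OF continuous])
    show "continuous_on {0..c} (\<lambda>x. C / 2 * x\<^sup>2 - K * x powr \<iota>)"
      using iota_pos by (intro continuous_intros continuous_on_powr') auto
    fix x assume x: "0 < x" "x < c"
    then show "(v has_real_derivative v' x) (at x)" "(v' has_real_derivative v'' x) (at x)"
      using cT by (auto intro: deriv_at deriv2_at)
    show "((\<lambda>x. C / 2 * x\<^sup>2 - K * x powr \<iota>) has_real_derivative C * x - K * (\<iota> * x powr (\<iota> - 1))) (at x)"
      using x by (auto intro!: derivative_eq_intros)
    have "((\<lambda>x. C * x - K * (\<iota> * x powr (\<iota> - 1)))
        has_real_derivative C - K * (\<iota> * ((\<iota> - 1) * x powr (\<iota> - 1 - 1)))) (at x)"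
      using x by (auto intro!: derivative_eq_intros)
    moreover have "C = K * \<iota> * (1 - \<iota>)"
      unfolding K_def using iota_pos iota_less_one by simp
    then have "C * x powr (\<iota> - 2) = K * \<iota> * (1 - \<iota>) * x powr (\<iota> - 2)"
      by simp
    then have "C - K * (\<iota> * ((\<iota> - 1) * x powr (\<iota> - 1 - 1))) = C + C * x powr (\<iota> - 2)"
      by (simp add: algebra_simps)
    ultimately show "((\<lambda>x. C * x - K * (\<iota> * x powr (\<iota> - 1))) has_real_derivative C + C * x powr (\<iota> - 2)) (at x)"
      by metis
    show "\<bar>v'' x\<bar> \<le> C + C * x powr (\<iota> - 2)"
      using deriv2_bound x cT by (auto simp: algebra_simps)
  qed
  also have "\<dots> \<le> (C * T powr (2 - \<iota>) + K) * (c powr \<iota> / \<iota> + b powr (\<iota> - 2) * (c - b)\<^sup>2)"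
    using b bc cT iota_pos iota_less_one C_nonneg K by (rule second_diff_origin_majorant_le)
  finally show ?thesis
    unfolding K_def .
qed

definition Cv :: real where
  "Cv = C * (1 + T powr (2 - \<iota>)) + C / (\<iota> * (1 - \<iota>))"

lemma Cv_ge: "C * T powr (2 - \<iota>) + C / (\<iota> * (1 - \<iota>)) \<le> Cv" "C * (1 + T powr (2 - \<iota>)) \<le> Cv"
  and Cv_nonneg: "0 \<le> Cv"
  unfolding Cv_def using C_nonneg iota_pos iota_less_one by (simp_all add: algebra_simps)

lemma Rres_2_le:
  assumes grid: "is_grid T N t" and N: "2 \<le> N"
  shows "\<bar>Rres v t 2\<bar> \<le> Cv * ((tau t 1 + tau t 2) powr \<iota> / \<iota> + t 1 powr (\<iota> - 2) * (tau t 2)\<^sup>2)"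
proof -
  have t0: "t 0 = 0"
    using grid by (simp add: is_grid_def)
  have "\<bar>Rres v t 2\<bar> = \<bar>second_diff v 0 (t 1) (t 2)\<bar>"
    by (simp add: Rres_eq_second_diff t0)
  also have "\<dots> \<le> (C * T powr (2 - \<iota>) + C / (\<iota> * (1 - \<iota>)))
      * (t 2 powr \<iota> / \<iota> + t 1 powr (\<iota> - 2) * (t 2 - t 1)\<^sup>2)"
    using N is_grid_pos[OF grid] is_grid_less[OF grid] is_grid_le[OF grid]
    by (intro second_diff_origin_le) auto
  also have "\<dots> \<le> Cv * (t 2 powr \<iota> / \<iota> + t 1 powr (\<iota> - 2) * (t 2 - t 1)\<^sup>2)"
    using Cv_ge(1) iota_pos by (intro mult_right_mono) auto
  also have "t 2 - t 1 = tau t 2"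
    by (simp add: tau_def)
  also have "t 2 = tau t 1 + tau t 2"
    using tau_add_tau[of 2 t] by (simp add: t0)
  finally show ?thesis .
qed

lemma Rres_le:
  assumes grid: "is_grid T N t" and n: "3 \<le> n" "n \<le> N"
  shows "\<bar>Rres v t n\<bar> \<le> Cv * (t (n - 2) powr (\<iota> - 2) * (tau t (n - 1) + tau t n)\<^sup>2
                      + t (n - 1) powr (\<iota> - 2) * (tau t n)\<^sup>2)"
proof -
  have "\<bar>Rres v t n\<bar> = \<bar>second_diff v (t (n - 2)) (t (n - 1)) (t n)\<bar>"
    using n by (simp add: Rres_eq_second_diff)
  also have "\<dots> \<le> C * (1 + T powr (2 - \<iota>)) * (t (n - 2) powr (\<iota> - 2) * (t n - t (n - 2))\<^sup>2)"
    using n is_grid_pos[OF grid] is_grid_less[OF grid] is_grid_le[OF grid]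
    by (intro second_diff_interior_le) auto
  also have "\<dots> \<le> Cv * (t (n - 2) powr (\<iota> - 2) * (t n - t (n - 2))\<^sup>2
      + t (n - 1) powr (\<iota> - 2) * (tau t n)\<^sup>2)"
    using Cv_ge(2) Cv_nonneg by (intro mult_mono add_increasing2) auto
  also have "t n - t (n - 2) = tau t (n - 1) + tau t n"
    using tau_add_tau[of n t] n by simp
  finally show ?thesis .
qed

lemma Rres_graded_le:
  assumes \<gamma>: "1 \<le> \<gamma>"
  shows "\<exists>Cg. \<forall>N::nat. \<forall>n. 2 \<le> n \<and> n \<le> N \<longrightarrow>
    \<bar>Rres v (graded T \<gamma> N) n\<bar> \<le> Cg * real N powr (- min 2 (\<gamma> * \<iota>))"
proof (intro exI allI impI)
  define A1 where "A1 = T powr \<iota> * (2 powr (\<gamma> * \<iota>) / \<iota> + (2 powr \<gamma>)\<^sup>2)"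
  define A2 where "A2 = 2 * T powr \<iota> * (2 * \<gamma> * 3 powr (\<gamma> - 1))\<^sup>2"
  have A: "0 \<le> A1" "0 \<le> A2"
    unfolding A1_def A2_def using iota_pos by auto
  fix N n :: nat
  assume n: "2 \<le> n \<and> n \<le> N"
  define E where "E = real N powr (- min 2 (\<gamma> * \<iota>))"
  have grid: "is_grid T N (graded T \<gamma> N)"
    using T_pos \<gamma> n by (intro is_grid_graded) auto
  have "\<bar>Rres v (graded T \<gamma> N) n\<bar> \<le> Cv * (A1 * E) \<or> \<bar>Rres v (graded T \<gamma> N) n\<bar> \<le> Cv * (A2 * E)"
  proof (cases "n = 2")
    case True
    then show ?thesis
      using Rres_2_le[OF grid] graded_first_le[OF T_pos iota_pos, of \<gamma> N] n \<gamma> Cv_nonneg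
      unfolding A1_def E_def by (auto intro: order_trans mult_left_mono)
  next
    case False
    then show ?thesis
      using Rres_le[OF grid, of n] graded_interior_le[OF T_pos _ \<gamma>, of \<iota> n N] n iota_less_one Cv_nonneg
      unfolding A2_def E_def by (auto intro: order_trans mult_left_mono)
  qed
  moreover have "Cv * (A1 * E) \<le> Cv * (A1 + A2) * E" "Cv * (A2 * E) \<le> Cv * (A1 + A2) * E"
    using A Cv_nonneg by (auto simp: E_def algebra_simps)
  ultimately show "\<bar>Rres v (graded T \<gamma> N) n\<bar> \<le> Cv * (A1 + A2) * real N powr (- min 2 (\<gamma> * \<iota>))"
    unfolding E_def by linarith
qed

end

theorem mainTheorem2:
  fixes v v' v'' :: "real \<Rightarrow> real" and T \<iota> C :: real
  assumes T: "0 < T"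
    and iota: "0 < \<iota>" "\<iota> < 1"
    and cont: "continuous_on {0..T} v"
    and d1: "\<forall>s\<in>{0<..T}. (v has_real_derivative v' s) (at s within {0<..T})"
    and d2: "\<forall>s\<in>{0<..T}. (v' has_real_derivative v'' s) (at s within {0<..T})"
    and cont2: "continuous_on {0<..T} v''"
    and bound: "\<forall>s\<in>{0<..T}. \<bar>v'' s\<bar> \<le> C * (1 + s powr (\<iota> - 2))"
  shows "(\<exists>Cv. \<forall>N t. is_grid T N t \<longrightarrow>
            (2 \<le> N \<longrightarrow> \<bar>Rres v t 2\<bar> \<le>
                Cv * ((tau t 1 + tau t 2) powr \<iota> / \<iota> + t 1 powr (\<iota> - 2) * (tau t 2)\<^sup>2)) \<and>
            (\<forall>n. 3 \<le> n \<and> n \<le> N \<longrightarrow> \<bar>Rres v t n\<bar> \<le>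
                Cv * (t (n - 2) powr (\<iota> - 2) * (tau t (n - 1) + tau t n)\<^sup>2
                      + t (n - 1) powr (\<iota> - 2) * (tau t n)\<^sup>2)))
       \<and> (\<forall>\<gamma>::real. 1 \<le> \<gamma> \<longrightarrow> (\<exists>Cg. \<forall>N::nat. \<forall>n. 2 \<le> n \<and> n \<le> N \<longrightarrow>
            \<bar>Rres v (graded T \<gamma> N) n\<bar> \<le> Cg * real N powr (- min 2 (\<gamma> * \<iota>))))"
proof -
  interpret weakly_singular T \<iota> C v v' v''
    using T iota cont d1 d2 bound by unfold_locales
  show ?thesis
    using Rres_2_le Rres_le Rres_graded_le by blast
qed

end
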